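(* Let $\phi=\{\phi_j\}$ be a sequence having strong limit values $\phi^*$. Then: (1) any two functions that are strong limit values of $\phi$ coincide $\mu$-a.e.; for every real constant $c$ the sequence $c\phi=\{c\phi_j\}$ has strong limit values $c\phi^*$; and for every $p>0$ the sequence $|\phi|^p=\{|\phi_j|^p\}$ has strong limit values $|\phi^*|^p$. (2) If moreover $\mu_j\to\mu$ weak-* regularly and $\psi=\{\psi_j\}\in\mathcal A(M)$ has strong limit values $\psi^*$, then $\phi+\psi=\{\phi_j+\psi_j\}$ has strong limit values $\phi^*+\psi^*$ and $\phi\psi=\{\phi_j\psi_j\}$ has strong limit values $\phi^*\psi^*$.
   Context: $K$ is a compact metric space and $M=\{\mu_j\}_{j\ge1}$ is a sequence of finite positive regular Borel measures on $K$ converging weak-* in $C(K)^*$ (i.e. $\int h\,d\mu_j\to\int h\,d\mu$ for all $h\in C(K)$) to a finite positive Borel measure $\mu$. Write $K_j=\operatorname{supp}\mu_j$ and $K_0=\operatorname{supp}\mu$. A "sequence" $\phi=\{\phi_j\}$ means a sequence of real-valued Borel functions $\phi_j$ on $K_j$. A sequence $\phi$ has weak limit values $\phi_*$ if $\phi_*$ is a $\mu$-integrable function on $K_0$ and $\int_{K_j}h\phi_j\,d\mu_j\to\int_{K_0}h\phi_*\,d\mu$ for every $h\in C(K)$; $\mathcal A(M)$ is the set of sequences having weak limit values. A sequence $\phi$ has strong limit values $\phi^*$ (a real-valued $\mu$-measurable function on $K_0$) if for all real $a<b$ and all $\varepsilon,\delta>0$ there are $j_0$ and an open set $O\subset K$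 containing $G(a,b)=\{x\in K_0:a\le\phi^*(x)<b\}$ such that $\mu_j(\{x\in K_j:\phi_j(x)<a-\varepsilon\}\cap O)+\mu_j(\{x\in K_j:\phi_j(x)>b+\varepsilon\}\cap O)<\delta$ for all $j\ge j_0$. The convergence $\mu_j\to\mu$ is called regular if for every $\mu$-measurable $A\subset K_0$ and $\varepsilon>0$ there are an open $O\supset A$ and $j_0$ with $\mu_j(O)<\mu(A)+\varepsilon$ for $j\ge j_0$. *)

theory Defs
  imports "HOL-Analysis.Analysis"
begin

definition msupp :: "'a::metric_space measure \<Rightarrow> 'a set" where
  "msupp N = {x. \<forall>U. open U \<and> x \<in> U \<longrightarrow> emeasure N U > 0}"

text \<open>Standing setting: finite Borel measures on the ambient type, concentrated on the
  compact set K, with mu_j converging weak-* to mu in C(K)*.\<close>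
definition weak_star_conv :: "'a::metric_space set \<Rightarrow> (nat \<Rightarrow> 'a measure) \<Rightarrow> 'a measure \<Rightarrow> bool" where
  "weak_star_conv K M mu \<longleftrightarrow>
     (\<forall>h::'a \<Rightarrow> real. continuous_on K h \<longrightarrow>
        (\<lambda>j. integral\<^sup>L (M j) h) \<longlonglongrightarrow> integral\<^sup>L mu h)"

definition is_seq :: "(nat \<Rightarrow> 'a::metric_space measure) \<Rightarrow> (nat \<Rightarrow> 'a \<Rightarrow> real) \<Rightarrow> bool" where
  "is_seq M phi \<longleftrightarrow> (\<forall>j. phi j \<in> borel_measurable (restrict_space (M j) (msupp (M j))))"

definition weak_lim :: "(nat \<Rightarrow> 'a::metric_space measure) \<Rightarrow> 'a measure \<Rightarrow> 'a set
    \<Rightarrow> (nat \<Rightarrow> 'a \<Rightarrow> real) \<Rightarrow> ('a \<Rightarrow> real) \<Rightarrow> bool" where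
  "weak_lim M mu K phi phil \<longleftrightarrow>
     set_integrable mu (msupp mu) phil \<and>
     (\<forall>j. set_integrable (M j) (msupp (M j)) (phi j)) \<and>
     (\<forall>h::'a \<Rightarrow> real. continuous_on K h \<longrightarrow>
        (\<lambda>j. LINT x:msupp (M j)|M j. h x * phi j x) \<longlonglongrightarrow> (LINT x:msupp mu|mu. h x * phil x))"

definition in_AM :: "(nat \<Rightarrow> 'a::metric_space measure) \<Rightarrow> 'a measure \<Rightarrow> 'a set
    \<Rightarrow> (nat \<Rightarrow> 'a \<Rightarrow> real) \<Rightarrow> bool" where
  "in_AM M mu K phi \<longleftrightarrow> (\<exists>phil. weak_lim M mu K phi phil)"

text \<open>Strong limit values.  Open sets are taken in the ambient space; since all
  sets involved lie in K this is equivalent to relative openness in K.\<close>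
definition strong_lim :: "(nat \<Rightarrow> 'a::metric_space measure) \<Rightarrow> 'a measure
    \<Rightarrow> (nat \<Rightarrow> 'a \<Rightarrow> real) \<Rightarrow> ('a \<Rightarrow> real) \<Rightarrow> bool" where
  "strong_lim M mu phi phis \<longleftrightarrow>
     phis \<in> borel_measurable (restrict_space (completion mu) (msupp mu)) \<and>
     (\<forall>a b \<epsilon> \<delta>. a < b \<and> \<epsilon> > 0 \<and> \<delta> > 0 \<longrightarrow>
        (\<exists>j0 U. open U \<and> {x \<in> msupp mu. a \<le> phis x \<and> phis x < b} \<subseteq> U \<and>
           (\<forall>j\<ge>j0. measure (M j) ({x \<in> msupp (M j). phi j x < a - \<epsilon>} \<inter> U)
                  + measure (M j) ({x \<in> msupp (M j). phi j x > b + \<epsilon>} \<inter> U) < \<delta>)))"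

text \<open>Regular convergence (mu-measurable = measurable for the completion of mu).\<close>
definition regular_conv :: "(nat \<Rightarrow> 'a::metric_space measure) \<Rightarrow> 'a measure \<Rightarrow> bool" where
  "regular_conv M mu \<longleftrightarrow>
     (\<forall>A \<epsilon>. A \<in> sets (completion mu) \<and> A \<subseteq> msupp mu \<and> \<epsilon> > 0 \<longrightarrow>
        (\<exists>U j0. open U \<and> A \<subseteq> U \<and>
           (\<forall>j\<ge>j0. measure (M j) U < measure (completion mu) A + \<epsilon>)))"

end

theory Submission
  imports Defs
begin

text \<open>
  The definition asks that every band G(a,b) = {a <= phis < b} of the limit function has
  an open neighbourhood U on which phi_j eventually rarely leaves [a - eps, b + eps].

  Uniqueness: if g and f are strong limit values of the same sequence, a g-band and an
  f-band at disjoint levels are controlled by open sets on whose intersection phi_j would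
  have to be near both levels; by the portmanteau inequality for open sets that
  intersection has small mu-measure, so g < f only on a null set.

  Algebra: for continuous F the band of F(phis, psis) is covered by finitely many grid
  cells on which (phis, psis) is nearly constant, plus the part where the limit values
  are large (strong_lim_compose).  For c * phi and |phi| powr p that part is empty, since
  their bands have bounded preimages; for sums and products it is small by regularity.
\<close>

text \<open>The support is closed: its complement is the union of all open null sets.\<close>

lemma msupp_closed: "closed (msupp N)"
proof -
  have "- msupp N = \<Union>{U. open U \<and> \<not> emeasure N U > 0}"
    unfolding msupp_def by blast
  then show ?thesis
    by (simp add: closed_def open_Union)
qed

lemma space_eq_UNIV: "sets N = sets borel \<Longrightarrow> space N = UNIV"
  using sets_eq_imp_space_eq[of N borel] by simp

lemma msupp_sets: "sets N = sets borel \<Longrightarrow> msupp N \<in> sets N"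
  using borel_closed[OF msupp_closed[of N]] by simp

text \<open>The
  complement of the support is exhausted by compact pieces of K at positive distance from
  the support, each covered by finitely many open null sets.\<close>

lemma compl_msupp_null:
  assumes K: "compact K" and N: "sets N = sets borel" and NK: "emeasure N (- K) = 0"
  shows "measure N (- msupp N) = 0"
proof -
  define C where "C n = K - (\<Union>y\<in>msupp N. ball y (1 / Suc n))" for n :: nat
  have C_null: "C n \<in> null_sets N" for n
  proof -
    have cC: "compact (C n)" unfolding C_def
      by (intro compact_diff K open_UN) auto
    let ?T = "{U. open U \<and> emeasure N U = 0}"
    have "C n \<subseteq> \<Union>?T"
    proof
      fix x assume "x \<in> C n"
      then have "x \<notin> msupp N" unfolding C_def by force
      then show "x \<in> \<Union>?T" unfolding msupp_def by (auto simp: not_gr_zero)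
    qed
    then obtain T' where T': "T' \<subseteq> ?T" "finite T'" "C n \<subseteq> \<Union>T'"
      using compactE[OF cC] by (metis (no_types, lifting) mem_Collect_eq)
    have "\<Union>T' \<in> null_sets N"
      using T'(1,2) N by (intro null_sets.finite_Union) (auto simp: null_sets_def)
    moreover have "C n \<in> sets N" using compact_imp_closed[OF cC] N by simp
    ultimately show ?thesis using T'(3) null_sets_subset by blast
  qed
  have "- msupp N \<subseteq> - K \<union> (\<Union>n. C n)"
  proof
    fix x assume x: "x \<in> - msupp N"
    obtain e where e: "e > 0" "ball x e \<inter> msupp N = {}"
      using x msupp_closed[of N] unfolding closed_def open_contains_ball by blast
    obtain n :: nat where n: "1 / Suc n < e"
      using e(1) by (metis nat_approx_posE)
    have "x \<notin> (\<Union>y\<in>msupp N. ball y (1 / Suc n))"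
      using e(2) n by (force simp: dist_commute)
    then show "x \<in> - K \<union> (\<Union>n. C n)" unfolding C_def by blast
  qed
  moreover have "- K \<in> null_sets N"
    using NK N compact_imp_closed[OF K] by (auto simp: null_sets_def)
  then have "- K \<union> (\<Union>n. C n) \<in> null_sets N"
    using C_null by auto
  moreover have "- msupp N \<in> sets N" using msupp_closed[of N] N by (simp add: borel_open)
  ultimately have "- msupp N \<in> null_sets N" using null_sets_subset by blast
  then show ?thesis by (simp add: measure_def null_setsD1)
qed

lemma restrict_level_set:
  assumes sp: "space N = UNIV" and S: "S \<in> sets N"
    and f: "f \<in> borel_measurable (restrict_space N S)" and B: "B \<in> sets borel"
  shows "{x \<in> S. f x \<in> B} \<in> sets N"
proof -
  have "f -` B \<inter> S \<in> sets (restrict_space N S)"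
    using measurable_sets[OF f B] sp by (simp add: space_restrict_space)
  then have "f -` B \<inter> S \<in> sets N"
    using sets_restrict_space_iff[of S N] S sp by auto
  moreover have "{x \<in> S. f x \<in> B} = f -` B \<inter> S" by blast
  ultimately show ?thesis by simp
qed

lemma supp_level_sets:
  fixes f :: "'a::metric_space \<Rightarrow> real"
  assumes N: "sets N = sets borel" and f: "f \<in> borel_measurable (restrict_space N (msupp N))"
  shows "{x \<in> msupp N. f x < c} \<in> sets N" and "{x \<in> msupp N. f x > c} \<in> sets N"
  using restrict_level_set[OF space_eq_UNIV[OF N] msupp_sets[OF N] f, of "{..<c}"]
    restrict_level_set[OF space_eq_UNIV[OF N] msupp_sets[OF N] f, of "{c<..}"] by simp_all

lemma is_seqD: "is_seq M f \<Longrightarrow> f j \<in> borel_measurable (restrict_space (M j) (msupp (M j)))"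
  unfolding is_seq_def by blast

lemma seq_level_sets:
  assumes "sets (M j) = sets borel" and "is_seq M f"
  shows "{x \<in> msupp (M j). f j x < c} \<in> sets (M j)"
    and "{x \<in> msupp (M j). f j x > c} \<in> sets (M j)"
  using supp_level_sets[OF assms(1) is_seqD[OF assms(2)]] by blast+

lemma limit_level_set:
  assumes mu: "sets mu = sets borel"
    and g: "g \<in> borel_measurable (restrict_space (completion mu) (msupp mu))"
    and B: "B \<in> sets borel"
  shows "{x \<in> msupp mu. g x \<in> B} \<in> sets (completion mu)"
  by (rule restrict_level_set[OF _ _ g B]) (use space_eq_UNIV[OF mu] msupp_sets[OF mu] in auto)

lemma open_indicator_approx:
  fixes W :: "'a::metric_space set"
  assumes W: "open W"
  obtains h :: "nat \<Rightarrow> 'a \<Rightarrow> real"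
  where "\<And>n. continuous_on UNIV (h n)" "\<And>n x. 0 \<le> h n x" "\<And>n x. h n x \<le> indicator W x"
    and "\<And>x. (\<lambda>n. h n x) \<longlonglongrightarrow> indicator W x"
proof (cases "W = UNIV")
  case True
  show ?thesis by (rule that[of "\<lambda>n x. 1"]) (auto simp: True)
next
  case False
  define h where "h n x = min 1 (real n * infdist x (- W))" for n :: nat and x
  have lim: "(\<lambda>n. h n x) \<longlonglongrightarrow> indicator W x" for x
  proof (cases "x \<in> W")
    case True
    have d: "infdist x (- W) > 0"
      using infdist_pos_not_in_closed[of "- W" x] W False True by auto
    obtain n0 :: nat where n0: "1 / infdist x (- W) < n0" using reals_Archimedean2 by blast
    have "h n x = 1" if "n \<ge> n0" for n
    proof -
      have "1 < real n0 * infdist x (- W)" using n0 d by (simp add: field_simps)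
      also have "\<dots> \<le> real n * infdist x (- W)" using that d by (intro mult_right_mono) auto
      finally show ?thesis unfolding h_def by simp
    qed
    then have "\<forall>\<^sub>F n in sequentially. h n x = 1"
      unfolding eventually_sequentially by blast
    then show ?thesis using True by (simp add: tendsto_eventually)
  qed (simp add: h_def)
  show ?thesis
  proof (rule that[of h])
    show "continuous_on UNIV (h n)" for n unfolding h_def
      by (intro continuous_intros continuous_on_infdist continuous_on_id)
    show "h n x \<le> indicator W x" for n x
      unfolding h_def by (cases "x \<in> W") auto
  qed (use lim in \<open>auto simp: h_def infdist_nonneg\<close>)
qed

lemma open_indicator_approx_integral:
  fixes h :: "nat \<Rightarrow> 'a::metric_space \<Rightarrow> real"
  assumes N: "sets N = sets borel" "finite_measure N" and W: "open W"
    and h_cont: "\<And>n. continuous_on UNIV (h n)" and h0: "\<And>n x. 0 \<le> h n x"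
    and h1: "\<And>n x. h n x \<le> indicator W x" and h_lim: "\<And>x. (\<lambda>n. h n x) \<longlonglongrightarrow> indicator W x"
  shows "integral\<^sup>L N (h n) \<le> measure N W"
    and "(\<lambda>n. integral\<^sup>L N (h n)) \<longlonglongrightarrow> measure N W"
proof -
  have h_meas: "h n \<in> borel_measurable N" for n
    by (subst measurable_cong_sets[OF N(1) refl]) (rule borel_measurable_continuous_onI[OF h_cont])
  have ind_meas: "(indicator W :: 'a \<Rightarrow> real) \<in> borel_measurable N"
    using N(1) W by (intro borel_measurable_indicator) simp
  have ind_bound: "norm (indicator W x :: real) \<le> 1" for x
    by (cases "x \<in> W") auto
  have h_bound: "norm (h n x) \<le> 1" for n x
    using h0[of n x] h1[of n x] by (cases "x \<in> W") auto
  have integral_W: "integral\<^sup>L N (indicator W :: 'a \<Rightarrow> real) = measure N W"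
    using space_eq_UNIV[OF N(1)] by simp
  have "integral\<^sup>L N (h n) \<le> integral\<^sup>L N (indicator W)"
  proof (rule integral_mono[OF _ _ h1])
    show "integrable N (h n)"
      using h_bound by (intro finite_measure.integrable_const_bound[OF N(2)] h_meas) auto
    show "integrable N (indicator W :: 'a \<Rightarrow> real)"
      using ind_bound by (intro finite_measure.integrable_const_bound[OF N(2)] ind_meas) auto
  qed
  then show "integral\<^sup>L N (h n) \<le> measure N W" by (simp only: integral_W)
  have "(\<lambda>n. integral\<^sup>L N (h n)) \<longlonglongrightarrow> integral\<^sup>L N (indicator W :: 'a \<Rightarrow> real)"
  proof (rule integral_dominated_convergence[where w="\<lambda>x. 1"])
    show "integrable N (\<lambda>x. 1::real)"
      using N(2) by (simp add: finite_measure.integrable_const)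
  qed (use ind_meas h_meas h_bound h_lim in auto)
  then show "(\<lambda>n. integral\<^sup>L N (h n)) \<longlonglongrightarrow> measure N W" by (simp only: integral_W)
qed

text \<open>The portmanteau inequality for open sets: weak-* convergence can only lose mass
  on open sets, so a uniform bound on the measures of W passes to the limit.\<close>

lemma weak_star_open_le:
  fixes W :: "'a::metric_space set"
  assumes conv: "weak_star_conv K M mu"
    and M_borel: "\<And>j. sets (M j) = sets borel" and M_fin: "\<And>j. finite_measure (M j)"
    and mu_borel: "sets mu = sets borel" and mu_fin: "finite_measure mu"
    and W: "open W" and le: "\<And>j. j \<ge> j0 \<Longrightarrow> measure (M j) W \<le> r"
  shows "measure mu W \<le> r"
proof -
  obtain h :: "nat \<Rightarrow> 'a \<Rightarrow> real" where h: "\<And>n. continuous_on UNIV (h n)" "\<And>n x. 0 \<le> h n x"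
    "\<And>n x. h n x \<le> indicator W x" "\<And>x. (\<lambda>n. h n x) \<longlonglongrightarrow> indicator W x"
    using open_indicator_approx[OF W] by metis
  note approx = open_indicator_approx_integral[OF _ _ W h]
  have "integral\<^sup>L mu (h n) \<le> r" for n
  proof (rule LIMSEQ_le_const2)
    show "(\<lambda>j. integral\<^sup>L (M j) (h n)) \<longlonglongrightarrow> integral\<^sup>L mu (h n)"
      using conv continuous_on_subset[OF h(1) subset_UNIV] unfolding weak_star_conv_def by blast
    show "\<exists>N. \<forall>j\<ge>N. integral\<^sup>L (M j) (h n) \<le> r"
      using approx(1)[OF M_borel M_fin] le by (meson order_trans)
  qed
  then show ?thesis
    using LIMSEQ_le_const2[OF approx(2)[OF mu_borel mu_fin]] by blast
qed

definition band :: "'a::metric_space measure \<Rightarrow> ('a \<Rightarrow> real) \<Rightarrow> real \<Rightarrow> real \<Rightarrow> 'a set" where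
  "band mu g a b = {x \<in> msupp mu. a \<le> g x \<and> g x < b}"

definition controls :: "(nat \<Rightarrow> 'a::metric_space measure) \<Rightarrow> (nat \<Rightarrow> 'a \<Rightarrow> real)
    \<Rightarrow> real \<Rightarrow> real \<Rightarrow> real \<Rightarrow> real \<Rightarrow> 'a set \<Rightarrow> bool" where
  "controls M f a b \<epsilon> \<delta> G \<longleftrightarrow>
     (\<exists>j0 U. open U \<and> G \<subseteq> U \<and>
        (\<forall>j\<ge>j0. measure (M j) ({x \<in> msupp (M j). f j x < a - \<epsilon>} \<inter> U)
               + measure (M j) ({x \<in> msupp (M j). f j x > b + \<epsilon>} \<inter> U) < \<delta>))"

lemma strong_lim_iff_controls:
  "strong_lim M mu phi phis \<longleftrightarrow>
     phis \<in> borel_measurable (restrict_space (completion mu) (msupp mu)) \<and>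
     (\<forall>a b \<epsilon> \<delta>. a < b \<and> \<epsilon> > 0 \<and> \<delta> > 0 \<longrightarrow> controls M phi a b \<epsilon> \<delta> (band mu phis a b))"
  unfolding strong_lim_def controls_def band_def ..

lemma strong_lim_measurable:
  "strong_lim M mu phi phis \<Longrightarrow> phis \<in> borel_measurable (restrict_space (completion mu) (msupp mu))"
  unfolding strong_lim_iff_controls by blast

lemma strong_lim_controls:
  "strong_lim M mu phi phis \<Longrightarrow> a < b \<Longrightarrow> \<epsilon> > 0 \<Longrightarrow> \<delta> > 0 \<Longrightarrow>
     controls M phi a b \<epsilon> \<delta> (band mu phis a b)"
  unfolding strong_lim_iff_controls by blast

lemma strong_limI:
  "phis \<in> borel_measurable (restrict_space (completion mu) (msupp mu)) \<Longrightarrow>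
   (\<And>a b \<epsilon> \<delta>. a < b \<Longrightarrow> \<epsilon> > 0 \<Longrightarrow> \<delta> > 0 \<Longrightarrow> controls M phi a b \<epsilon> \<delta> (band mu phis a b)) \<Longrightarrow>
   strong_lim M mu phi phis"
  unfolding strong_lim_iff_controls by blast

lemma controls_empty: "\<delta> > 0 \<Longrightarrow> controls M f a b \<epsilon> \<delta> {}"
  unfolding controls_def by (intro exI[of _ 0] exI[of _ "{}"]) auto

lemma controls_subset: "controls M f a b \<epsilon> \<delta> G \<Longrightarrow> G' \<subseteq> G \<Longrightarrow> controls M f a b \<epsilon> \<delta> G'"
  unfolding controls_def by blast

lemma controls_Un:
  assumes M_borel: "\<And>j. sets (M j) = sets borel" and f: "is_seq M f"
    and G1: "controls M f a b \<epsilon> \<delta>1 G1" and G2: "controls M f a b \<epsilon> \<delta>2 G2"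
  shows "controls M f a b \<epsilon> (\<delta>1 + \<delta>2) (G1 \<union> G2)"
proof -
  obtain j1 U1 where U1: "open U1" "G1 \<subseteq> U1"
    "\<And>j. j \<ge> j1 \<Longrightarrow> measure (M j) ({x \<in> msupp (M j). f j x < a - \<epsilon>} \<inter> U1)
               + measure (M j) ({x \<in> msupp (M j). f j x > b + \<epsilon>} \<inter> U1) < \<delta>1"
    using G1 unfolding controls_def by blast
  obtain j2 U2 where U2: "open U2" "G2 \<subseteq> U2"
    "\<And>j. j \<ge> j2 \<Longrightarrow> measure (M j) ({x \<in> msupp (M j). f j x < a - \<epsilon>} \<inter> U2)
               + measure (M j) ({x \<in> msupp (M j). f j x > b + \<epsilon>} \<inter> U2) < \<delta>2"
    using G2 unfolding controls_def by blast
  have split: "measure (M j) (A \<inter> (U1 \<union> U2)) \<le> measure (M j) (A \<inter> U1) + measure (M j) (A \<inter> U2)"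
    if "A \<in> sets (M j)" for A j
    using measure_Un_le[of "A \<inter> U1" "M j" "A \<inter> U2"] that U1(1) U2(1) M_borel
    by (simp add: Int_Un_distrib)
  have "measure (M j) ({x \<in> msupp (M j). f j x < a - \<epsilon>} \<inter> (U1 \<union> U2))
      + measure (M j) ({x \<in> msupp (M j). f j x > b + \<epsilon>} \<inter> (U1 \<union> U2)) < \<delta>1 + \<delta>2"
    if j: "j \<ge> max j1 j2" for j
  proof -
    have "j \<ge> j1" "j \<ge> j2" using j by auto
    then show ?thesis
      using U1(3)[of j] U2(3)[of j] split[OF seq_level_sets(1)[OF M_borel f], of j "a - \<epsilon>"]
        split[OF seq_level_sets(2)[OF M_borel f], of j "b + \<epsilon>"] by linarith
  qed
  then show ?thesis
    unfolding controls_def using U1(1,2) U2(1,2)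
    by (intro exI[of _ "max j1 j2"] exI[of _ "U1 \<union> U2"]) auto
qed

text \<open>Finitely many sets controlled with error delta: the union is controlled with error
  (card I + 1) * delta (the extra term absorbs the case I = {}).\<close>

lemma controls_UN:
  assumes M_borel: "\<And>j. sets (M j) = sets borel" and f: "is_seq M f"
    and I: "finite I" and \<delta>: "\<delta> > 0" and G: "\<And>i. i \<in> I \<Longrightarrow> controls M f a b \<epsilon> \<delta> (G i)"
  shows "controls M f a b \<epsilon> (real (card I + 1) * \<delta>) (\<Union>i\<in>I. G i)"
  using I G
proof (induction I rule: finite_induct)
  case empty
  then show ?case using controls_empty[OF \<delta>] by simp
next
  case (insert i I)
  have "controls M f a b \<epsilon> (\<delta> + real (card I + 1) * \<delta>) (G i \<union> (\<Union>i\<in>I. G i))"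
    by (rule controls_Un[OF M_borel f]) (use insert.IH insert.prems in auto)
  moreover have "\<delta> + real (card I + 1) * \<delta> = real (card (insert i I) + 1) * \<delta>"
    using insert.hyps by (simp add: algebra_simps)
  ultimately show ?case by simp
qed

text \<open>Pointwise core of the composition step, for a single measure: where f stays within eta
  of [s, t] and g within eta of [u, v], F(f, g) stays in [a - epsilon, b + epsilon];
  so the escape sets of F(f, g) are covered by those of f and g.\<close>

lemma escape_compose_le:
  fixes F :: "real \<Rightarrow> real \<Rightarrow> real" and f g :: "'a::metric_space \<Rightarrow> real"
  assumes N: "sets N = sets borel" "finite_measure N"
    and f: "f \<in> borel_measurable (restrict_space N (msupp N))"
    and g: "g \<in> borel_measurable (restrict_space N (msupp N))"
    and U: "open U1" "open U2"
    and F: "\<And>y z. s - \<eta> \<le> y \<Longrightarrow> y \<le> t + \<eta> \<Longrightarrow> u - \<eta> \<le> z \<Longrightarrow> z \<le> v + \<eta> \<Longrightarrow>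
              a - \<epsilon> \<le> F y z \<and> F y z \<le> b + \<epsilon>"
  shows "measure N ({x \<in> msupp N. F (f x) (g x) < a - \<epsilon>} \<inter> (U1 \<inter> U2))
      + measure N ({x \<in> msupp N. F (f x) (g x) > b + \<epsilon>} \<inter> (U1 \<inter> U2))
    \<le> 2 * (measure N ({x \<in> msupp N. f x < s - \<eta>} \<inter> U1) + measure N ({x \<in> msupp N. f x > t + \<eta>} \<inter> U1)
         + measure N ({x \<in> msupp N. g x < u - \<eta>} \<inter> U2) + measure N ({x \<in> msupp N. g x > v + \<eta>} \<inter> U2))"
proof -
  let ?B1 = "{x \<in> msupp N. f x < s - \<eta>} \<inter> U1 \<union> {x \<in> msupp N. f x > t + \<eta>} \<inter> U1"
  let ?B2 = "{x \<in> msupp N. g x < u - \<eta>} \<inter> U2 \<union> {x \<in> msupp N. g x > v + \<eta>} \<inter> U2"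
  have U_sets: "U1 \<in> sets N" "U2 \<in> sets N" using U N(1) by auto
  note levels = supp_level_sets[OF N(1) f] supp_level_sets[OF N(1) g]
  have B1: "?B1 \<in> sets N" and B2: "?B2 \<in> sets N" using levels U_sets by auto
  have inside: "x \<in> ?B1 \<union> ?B2"
    if x: "x \<in> msupp N" "x \<in> U1 \<inter> U2"
      and F_out: "\<not> (a - \<epsilon> \<le> F (f x) (g x) \<and> F (f x) (g x) \<le> b + \<epsilon>)" for x
  proof (rule ccontr)
    assume "x \<notin> ?B1 \<union> ?B2"
    then have "\<not> f x < s - \<eta>" "\<not> f x > t + \<eta>" "\<not> g x < u - \<eta>" "\<not> g x > v + \<eta>"
      using x by blast+
    then show False using F F_out by (meson linorder_not_le)
  qed
  have "measure N (?B1 \<union> ?B2) \<le> measure N ?B1 + measure N ?B2"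
    by (rule measure_Un_le[OF B1 B2])
  moreover have "measure N ?B1 \<le> measure N ({x \<in> msupp N. f x < s - \<eta>} \<inter> U1)
      + measure N ({x \<in> msupp N. f x > t + \<eta>} \<inter> U1)"
    using levels U_sets by (intro measure_Un_le) auto
  moreover have "measure N ?B2 \<le> measure N ({x \<in> msupp N. g x < u - \<eta>} \<inter> U2)
      + measure N ({x \<in> msupp N. g x > v + \<eta>} \<inter> U2)"
    using levels U_sets by (intro measure_Un_le) auto
  moreover have "measure N ({x \<in> msupp N. F (f x) (g x) < a - \<epsilon>} \<inter> (U1 \<inter> U2)) \<le> measure N (?B1 \<union> ?B2)"
    and "measure N ({x \<in> msupp N. F (f x) (g x) > b + \<epsilon>} \<inter> (U1 \<inter> U2)) \<le> measure N (?B1 \<union> ?B2)"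
    by (rule finite_measure.finite_measure_mono[OF N(2) _ sets.Un[OF B1 B2]], use inside in force)+
  ultimately show ?thesis by argo
qed

lemma controls_compose:
  fixes F :: "real \<Rightarrow> real \<Rightarrow> real"
  assumes M_borel: "\<And>j. sets (M j) = sets borel" and M_fin: "\<And>j. finite_measure (M j)"
    and phi_seq: "is_seq M phi" and psi_seq: "is_seq M psi"
    and phi: "controls M phi s1 t1 \<eta> \<delta> G1" and psi: "controls M psi s2 t2 \<eta> \<delta> G2"
    and F: "\<And>y z. s1 - \<eta> \<le> y \<Longrightarrow> y \<le> t1 + \<eta> \<Longrightarrow> s2 - \<eta> \<le> z \<Longrightarrow> z \<le> t2 + \<eta> \<Longrightarrow>
              a - \<epsilon> \<le> F y z \<and> F y z \<le> b + \<epsilon>"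
  shows "controls M (\<lambda>j x. F (phi j x) (psi j x)) a b \<epsilon> (4 * \<delta>) (G1 \<inter> G2)"
proof -
  obtain j1 U1 where U1: "open U1" "G1 \<subseteq> U1"
    "\<And>j. j \<ge> j1 \<Longrightarrow> measure (M j) ({x \<in> msupp (M j). phi j x < s1 - \<eta>} \<inter> U1)
               + measure (M j) ({x \<in> msupp (M j). phi j x > t1 + \<eta>} \<inter> U1) < \<delta>"
    using phi unfolding controls_def by blast
  obtain j2 U2 where U2: "open U2" "G2 \<subseteq> U2"
    "\<And>j. j \<ge> j2 \<Longrightarrow> measure (M j) ({x \<in> msupp (M j). psi j x < s2 - \<eta>} \<inter> U2)
               + measure (M j) ({x \<in> msupp (M j). psi j x > t2 + \<eta>} \<inter> U2) < \<delta>"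
    using psi unfolding controls_def by blast
  have "measure (M j) ({x \<in> msupp (M j). F (phi j x) (psi j x) < a - \<epsilon>} \<inter> (U1 \<inter> U2))
      + measure (M j) ({x \<in> msupp (M j). F (phi j x) (psi j x) > b + \<epsilon>} \<inter> (U1 \<inter> U2)) < 4 * \<delta>"
    if j: "j \<ge> max j1 j2" for j
    using escape_compose_le[where F = F and N = "M j" and f = "phi j" and g = "psi j"
        and s = s1 and t = t1 and u = s2 and v = t2 and \<eta> = \<eta> and a = a and b = b and \<epsilon> = \<epsilon>,
        OF M_borel M_fin is_seqD[OF phi_seq] is_seqD[OF psi_seq] U1(1) U2(1) F]
      U1(3)[of j] U2(3)[of j] j
    by simp
  then show ?thesis
    unfolding controls_def using U1(1,2) U2(1,2)
    by (intro exI[of _ "max j1 j2"] exI[of _ "U1 \<inter> U2"]) auto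
qed

lemma controls_small_set:
  assumes reg: "regular_conv M mu"
    and M_borel: "\<And>j. sets (M j) = sets borel" and M_fin: "\<And>j. finite_measure (M j)"
    and A: "A \<in> sets (completion mu)" "A \<subseteq> msupp mu"
    and small: "2 * measure (completion mu) A < \<delta>"
  shows "controls M f a b \<epsilon> \<delta> A"
proof -
  let ?r = "\<delta> / 2 - measure (completion mu) A"
  have "?r > 0" using small by simp
  then have "\<exists>U j0. open U \<and> A \<subseteq> U \<and> (\<forall>j\<ge>j0. measure (M j) U < measure (completion mu) A + ?r)"
    using reg A unfolding regular_conv_def by blast
  then obtain U j0 where U: "open U" "A \<subseteq> U" and mU: "\<And>j. j \<ge> j0 \<Longrightarrow> measure (M j) U < \<delta> / 2"
    by auto
  have le_U: "measure (M j) (S \<inter> U) \<le> measure (M j) U" for j S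
    using U(1) M_borel by (intro finite_measure.finite_measure_mono[OF M_fin]) auto
  have "measure (M j) ({x \<in> msupp (M j). f j x < a - \<epsilon>} \<inter> U)
      + measure (M j) ({x \<in> msupp (M j). f j x > b + \<epsilon>} \<inter> U) < \<delta>" if "j \<ge> j0" for j
    using le_U[of j] mU[OF that] by (smt (verit) field_sum_of_halves)
  then show ?thesis
    unfolding controls_def using U by blast
qed

lemma band_sets:
  assumes "sets mu = sets borel"
    and "g \<in> borel_measurable (restrict_space (completion mu) (msupp mu))"
  shows "band mu g a b \<in> sets (completion mu)"
  using limit_level_set[OF assms, of "{a..<b}"] unfolding band_def by simp

lemma measure_overlap_le:
  fixes f :: "'a::metric_space \<Rightarrow> real"
  assumes K: "compact K" and N: "sets N = sets borel" "finite_measure N" and NK: "emeasure N (- K) = 0"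
    and f: "f \<in> borel_measurable (restrict_space N (msupp N))"
    and U: "open U" "open V" and gap: "b' < c'"
  shows "measure N (U \<inter> V) \<le> measure N ({x \<in> msupp N. f x > b'} \<inter> U) + measure N ({x \<in> msupp N. f x < c'} \<inter> V)"
proof -
  let ?A = "{x \<in> msupp N. f x > b'} \<inter> U" and ?B = "{x \<in> msupp N. f x < c'} \<inter> V"
  have A: "?A \<in> sets N" and B: "?B \<in> sets N"
    using supp_level_sets[OF N(1) f] U N(1) by auto
  have C: "- msupp N \<in> sets N"
    using msupp_closed[of N] N(1) by (simp add: borel_open)
  have "U \<inter> V \<subseteq> (?A \<union> ?B) \<union> - msupp N"
  proof
    fix x assume x: "x \<in> U \<inter> V"
    have "f x > b' \<or> f x < c'" using gap by linarith
    then show "x \<in> (?A \<union> ?B) \<union> - msupp N" using x by blast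
  qed
  then have "measure N (U \<inter> V) \<le> measure N ((?A \<union> ?B) \<union> - msupp N)"
    by (intro finite_measure.finite_measure_mono[OF N(2)] sets.Un A B C)
  also have "\<dots> \<le> measure N (?A \<union> ?B) + measure N (- msupp N)"
    by (intro measure_Un_le sets.Un A B C)
  also have "\<dots> \<le> measure N ?A + measure N ?B"
    using measure_Un_le[OF A B] compl_msupp_null[OF K N(1) NK] by simp
  finally show ?thesis .
qed

text \<open>If the same sequence has strong limit values g and f, then g-bands and f-bands
  at disjoint levels have arbitrarily small measure: on the intersection of the two
  controlling open sets phi_j would have to be near both levels at once.\<close>

lemma disjoint_bands_small:
  fixes K :: "'a::metric_space set"
  assumes K: "compact K"
    and M_borel: "\<And>j. sets (M j) = sets borel" and M_fin: "\<And>j. finite_measure (M j)"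
    and M_K: "\<And>j. emeasure (M j) (- K) = 0"
    and mu_borel: "sets mu = sets borel" and mu_fin: "finite_measure mu"
    and conv: "weak_star_conv K M mu" and phi_seq: "is_seq M phi"
    and g: "strong_lim M mu phi g" and f: "strong_lim M mu phi f"
    and ab: "a < b" and bc: "b < c" and cd: "c < d" and \<delta>: "\<delta> > 0"
  shows "emeasure (completion mu) (band mu g a b \<inter> band mu f c d) \<le> ennreal (2 * \<delta>)"
proof -
  define e where "e = (c - b) / 3"
  have e: "e > 0" and gap: "b + e < c - e" using bc by (simp_all add: e_def field_simps)
  obtain j1 U where U: "open U" "band mu g a b \<subseteq> U"
    "\<And>j. j \<ge> j1 \<Longrightarrow> measure (M j) ({x \<in> msupp (M j). phi j x < a - e} \<inter> U)
                  + measure (M j) ({x \<in> msupp (M j). phi j x > b + e} \<inter> U) < \<delta>"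
    using strong_lim_controls[OF g ab e \<delta>] unfolding controls_def by blast
  obtain j2 V where V: "open V" "band mu f c d \<subseteq> V"
    "\<And>j. j \<ge> j2 \<Longrightarrow> measure (M j) ({x \<in> msupp (M j). phi j x < c - e} \<inter> V)
                  + measure (M j) ({x \<in> msupp (M j). phi j x > d + e} \<inter> V) < \<delta>"
    using strong_lim_controls[OF f cd e \<delta>] unfolding controls_def by blast
  have UV: "open (U \<inter> V)" using U(1) V(1) by auto
  have "measure (M j) (U \<inter> V) \<le> 2 * \<delta>" if j: "j \<ge> max j1 j2" for j
  proof -
    have "j \<ge> j1" "j \<ge> j2" using j by auto
    then show ?thesis
      using measure_overlap_le[OF K M_borel M_fin M_K is_seqD[OF phi_seq, of j] U(1) V(1) gap]
        U(3)[of j] V(3)[of j] measure_nonneg[of "M j" "{x \<in> msupp (M j). phi j x < a - e} \<inter> U"]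
        measure_nonneg[of "M j" "{x \<in> msupp (M j). phi j x > d + e} \<inter> V"] by linarith
  qed
  then have "measure mu (U \<inter> V) \<le> 2 * \<delta>"
    using weak_star_open_le[OF conv M_borel M_fin mu_borel mu_fin UV, of "max j1 j2"] by blast
  moreover have "emeasure (completion mu) (band mu g a b \<inter> band mu f c d) \<le> emeasure mu (U \<inter> V)"
  proof -
    have "U \<inter> V \<in> sets mu" using UV mu_borel by simp
    then have "emeasure (completion mu) (band mu g a b \<inter> band mu f c d) \<le> emeasure (completion mu) (U \<inter> V)"
      using U(2) V(2) by (intro emeasure_mono) auto
    then show ?thesis using \<open>U \<inter> V \<in> sets mu\<close> by simp
  qed
  ultimately show ?thesis
    using finite_measure.emeasure_eq_measure[OF mu_fin] by (metis ennreal_leI order_trans)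
qed

text \<open>Countably many rational band pairs cover the set where g < f, each of them null.\<close>

lemma strong_lim_not_less:
  fixes K :: "'a::metric_space set"
  assumes K: "compact K"
    and M_borel: "\<And>j. sets (M j) = sets borel" and M_fin: "\<And>j. finite_measure (M j)"
    and M_K: "\<And>j. emeasure (M j) (- K) = 0"
    and mu_borel: "sets mu = sets borel" and mu_fin: "finite_measure mu"
    and conv: "weak_star_conv K M mu" and phi_seq: "is_seq M phi"
    and g: "strong_lim M mu phi g" and f: "strong_lim M mu phi f"
  shows "AE x in mu. x \<in> msupp mu \<longrightarrow> \<not> g x < f x"
proof -
  define A where "A t = (case t of (r1, r2, n) \<Rightarrow>
      band mu g (r1 - real (Suc n)) r1 \<inter> band mu f r2 (r2 + real (Suc n)))" for t
  define T where "T = {(r1::real, r2::real, n::nat). r1 \<in> \<rat> \<and> r2 \<in> \<rat> \<and> r1 < r2}"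
  have "countable ((\<rat>::real set) \<times> (\<rat>::real set) \<times> (UNIV :: nat set))"
    using countable_rat by (intro countable_SIGMA) auto
  then have T_countable: "countable T"
    by (rule countable_subset[rotated]) (auto simp: T_def)
  have A_null: "A t \<in> null_sets (completion mu)" if t: "t \<in> T" for t
  proof -
    obtain r1 r2 n where t_eq: "t = (r1, r2, n)" and r12: "r1 < r2"
      using t unfolding T_def by auto
    have A_sets: "A t \<in> sets (completion mu)"
      unfolding A_def t_eq
      using band_sets[OF mu_borel strong_lim_measurable[OF g]]
        band_sets[OF mu_borel strong_lim_measurable[OF f]] by auto
    have "emeasure (completion mu) (A t) \<le> 0"
    proof (rule ennreal_le_epsilon)
      fix e :: real assume "e > 0"
      then show "emeasure (completion mu) (A t) \<le> 0 + ennreal e"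
        using disjoint_bands_small[OF K M_borel M_fin M_K mu_borel mu_fin conv phi_seq g f,
            of "r1 - real (Suc n)" r1 r2 "r2 + real (Suc n)" "e / 2"] r12
        unfolding A_def t_eq by simp
    qed
    then show ?thesis using A_sets by (simp add: null_sets_def)
  qed
  have "AE x in completion mu. \<forall>t\<in>T. x \<notin> A t"
    using T_countable A_null by (subst AE_ball_countable) (auto intro: AE_not_in)
  then have "AE x in completion mu. x \<in> msupp mu \<longrightarrow> \<not> g x < f x"
  proof (rule AE_mp, intro AE_I2 impI notI)
    fix x assume avoid: "\<forall>t\<in>T. x \<notin> A t" and x: "x \<in> msupp mu" and lt: "g x < f x"
    obtain r1 where r1: "r1 \<in> \<rat>" "g x < r1" "r1 < f x" using Rats_dense_in_real[OF lt] by blast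
    obtain r2 where r2: "r2 \<in> \<rat>" "r1 < r2" "r2 < f x" using Rats_dense_in_real[OF r1(3)] by blast
    obtain n :: nat where n: "max (r1 - g x) (f x - r2) < real n" using reals_Archimedean2 by blast
    have "(r1, r2, n) \<in> T" unfolding T_def using r1 r2 by auto
    moreover have "x \<in> A (r1, r2, n)" unfolding A_def band_def using x r1 r2 n by auto
    ultimately show False using avoid by blast
  qed
  then show ?thesis by (simp add: AE_completion_iff)
qed

lemma strong_lim_unique:
  fixes K :: "'a::metric_space set"
  assumes K: "compact K"
    and M_borel: "\<And>j. sets (M j) = sets borel" and M_fin: "\<And>j. finite_measure (M j)"
    and M_K: "\<And>j. emeasure (M j) (- K) = 0"
    and mu_borel: "sets mu = sets borel" and mu_fin: "finite_measure mu"
    and conv: "weak_star_conv K M mu" and phi_seq: "is_seq M phi"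
    and g: "strong_lim M mu phi g" and f: "strong_lim M mu phi f"
  shows "AE x in mu. x \<in> msupp mu \<longrightarrow> g x = f x"
  using strong_lim_not_less[OF assms] strong_lim_not_less[OF assms(1-8) f g]
  by eventually_elim auto

lemma borel_measurable_compose2:
  fixes F :: "real \<Rightarrow> real \<Rightarrow> real"
  assumes F: "continuous_on UNIV (\<lambda>(y, z). F y z)"
    and f: "f \<in> borel_measurable N" and g: "g \<in> borel_measurable N"
  shows "(\<lambda>x. F (f x) (g x)) \<in> borel_measurable N"
proof -
  have "(\<lambda>x. (f x, g x)) \<in> N \<rightarrow>\<^sub>M borel"
    using measurable_Pair[OF f g] by (simp add: borel_prod)
  from measurable_compose[OF this borel_measurable_continuous_onI[OF F]]
  show ?thesis by simp
qed

lemma is_seq_compose: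
  fixes F :: "real \<Rightarrow> real \<Rightarrow> real"
  assumes "continuous_on UNIV (\<lambda>(y, z). F y z)" and "is_seq M phi" and "is_seq M psi"
  shows "is_seq M (\<lambda>j x. F (phi j x) (psi j x))"
  using assms borel_measurable_compose2[OF assms(1)] unfolding is_seq_def by blast

lemma continuous_uniform_on_bounded:
  fixes F :: "real \<Rightarrow> real \<Rightarrow> real"
  assumes F: "continuous_on UNIV (\<lambda>(y, z). F y z)" and \<epsilon>: "\<epsilon> > 0"
  obtains h where "h > 0"
    and "\<And>y z y' z'. \<bar>y\<bar> < N \<Longrightarrow> \<bar>z\<bar> < N \<Longrightarrow> \<bar>y' - y\<bar> \<le> 2 * h \<Longrightarrow> \<bar>z' - z\<bar> \<le> 2 * h \<Longrightarrow>
           \<bar>F y' z' - F y z\<bar> < \<epsilon>"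
proof -
  let ?I = "{- \<bar>N\<bar> - 1 .. \<bar>N\<bar> + 1}"
  have "uniformly_continuous_on (?I \<times> ?I) (\<lambda>(y, z). F y z)"
    using F by (intro compact_uniformly_continuous compact_Times) (auto intro: continuous_on_subset)
  then obtain d where d: "d > 0"
    and uc: "\<And>y y' z z'. y \<in> ?I \<Longrightarrow> y' \<in> ?I \<Longrightarrow> z \<in> ?I \<Longrightarrow> z' \<in> ?I \<Longrightarrow>
              dist y y' < d \<Longrightarrow> dist z z' < d \<Longrightarrow> dist (F y z) (F y' z') < \<epsilon>"
    using \<epsilon> unfolding uniformly_continuous_on_prod_metric by fastforce
  define h where "h = min (1 / 2) (d / 4)"
  show ?thesis
  proof (rule that)
    show "h > 0" using d by (simp add: h_def)
    fix y z y' z' :: real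
    assume "\<bar>y\<bar> < N" "\<bar>z\<bar> < N" "\<bar>y' - y\<bar> \<le> 2 * h" "\<bar>z' - z\<bar> \<le> 2 * h"
    moreover have "2 * h \<le> 1" "2 * h < d" using d by (auto simp: h_def)
    ultimately have "y \<in> ?I" "y' \<in> ?I" "z \<in> ?I" "z' \<in> ?I" "dist y' y < d" "dist z' z < d"
      by (auto simp: abs_le_iff abs_less_iff dist_real_def)
    then show "\<bar>F y' z' - F y z\<bar> < \<epsilon>"
      using uc[of y' y z' z] by (simp add: dist_real_def)
  qed
qed

lemma grid_cover:
  fixes phis psis :: "'a::metric_space \<Rightarrow> real" and N h :: real and G :: "'a set"
  assumes h: "h > 0" and G: "G \<subseteq> msupp mu"
  defines "B \<equiv> {x \<in> G. \<bar>phis x\<bar> < N \<and> \<bar>psis x\<bar> < N}"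
  shows "B \<subseteq> (\<Union>(k, l) \<in> {- \<lceil>N / h\<rceil> .. \<lceil>N / h\<rceil>} \<times> {- \<lceil>N / h\<rceil> .. \<lceil>N / h\<rceil>}.
      B \<inter> band mu phis (of_int k * h) (of_int k * h + h) \<inter> band mu psis (of_int l * h) (of_int l * h + h))"
proof
  have cell: "\<exists>k \<in> {- \<lceil>N / h\<rceil> .. \<lceil>N / h\<rceil>}. of_int k * h \<le> y \<and> y < of_int k * h + h"
    if y: "\<bar>y\<bar> < N" for y :: real
  proof
    define k where "k = \<lfloor>y / h\<rfloor>"
    have "of_int k \<le> y / h" "y / h < of_int k + 1"
      unfolding k_def by linarith+
    then show "of_int k * h \<le> y \<and> y < of_int k * h + h"
      using h by (simp add: field_simps)
    have "- (N / h) < y / h" "y / h < N / h"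
      using y h by (auto simp: field_simps abs_less_iff)
    then show "k \<in> {- \<lceil>N / h\<rceil> .. \<lceil>N / h\<rceil>}"
      unfolding k_def by (simp add: le_ceiling_iff floor_le_iff) linarith
  qed
  fix x assume x: "x \<in> B"
  then obtain k l where "k \<in> {- \<lceil>N / h\<rceil> .. \<lceil>N / h\<rceil>}" "of_int k * h \<le> phis x" "phis x < of_int k * h + h"
    and "l \<in> {- \<lceil>N / h\<rceil> .. \<lceil>N / h\<rceil>}" "of_int l * h \<le> psis x" "psis x < of_int l * h + h"
    using cell[of "phis x"] cell[of "psis x"] unfolding B_def by blast
  then show "x \<in> (\<Union>(k, l) \<in> {- \<lceil>N / h\<rceil> .. \<lceil>N / h\<rceil>} \<times> {- \<lceil>N / h\<rceil> .. \<lceil>N / h\<rceil>}.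
      B \<inter> band mu phis (of_int k * h) (of_int k * h + h) \<inter> band mu psis (of_int l * h) (of_int l * h + h))"
    using x G unfolding B_def band_def by blast
qed

text \<open>The cell argument: on a cell of side h in which the limit values (phis, psis) stay
  bounded by N and F(phis, psis) lies in [a, b), uniform continuity of F lets the
  controls of phi and psi at margin h transfer to F(phi, psi).\<close>

lemma controls_cell:
  fixes F :: "real \<Rightarrow> real \<Rightarrow> real"
  assumes M_borel: "\<And>j. sets (M j) = sets borel" and M_fin: "\<And>j. finite_measure (M j)"
    and phi_seq: "is_seq M phi" and psi_seq: "is_seq M psi"
    and phis: "strong_lim M mu phi phis" and psis: "strong_lim M mu psi psis"
    and h: "h > 0" and \<delta>: "\<delta> > 0"
    and UC: "\<And>y z y' z'. \<bar>y\<bar> < N \<Longrightarrow> \<bar>z\<bar> < N \<Longrightarrow> \<bar>y' - y\<bar> \<le> 2 * h \<Longrightarrow> \<bar>z' - z\<bar> \<le> 2 * h \<Longrightarrow>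
               \<bar>F y' z' - F y z\<bar> < \<epsilon>"
  shows "controls M (\<lambda>j x. F (phi j x) (psi j x)) a b \<epsilon> \<delta>
     ({x \<in> band mu (\<lambda>x. F (phis x) (psis x)) a b. \<bar>phis x\<bar> < N \<and> \<bar>psis x\<bar> < N}
        \<inter> band mu phis s (s + h) \<inter> band mu psis t (t + h))" (is "controls _ _ _ _ _ _ ?C")
proof (cases "?C = {}")
  case True
  then show ?thesis using controls_empty[OF \<delta>] by simp
next
  case False
  then obtain x0 where x0: "x0 \<in> ?C" by blast
  define y0 z0 where "y0 = phis x0" and "z0 = psis x0"
  have y0: "\<bar>y0\<bar> < N" "s \<le> y0" "y0 < s + h" and z0: "\<bar>z0\<bar> < N" "t \<le> z0" "z0 < t + h"
    and F0: "a \<le> F y0 z0" "F y0 z0 < b"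
    using x0 unfolding y0_def z0_def band_def by auto
  have "controls M (\<lambda>j x. F (phi j x) (psi j x)) a b \<epsilon> (4 * (\<delta> / 4))
      (band mu phis s (s + h) \<inter> band mu psis t (t + h))"
  proof (rule controls_compose[OF M_borel M_fin phi_seq psi_seq])
    show "controls M phi s (s + h) h (\<delta> / 4) (band mu phis s (s + h))"
      using strong_lim_controls[OF phis _ h] h \<delta> by simp
    show "controls M psi t (t + h) h (\<delta> / 4) (band mu psis t (t + h))"
      using strong_lim_controls[OF psis _ h] h \<delta> by simp
    fix y z assume "s - h \<le> y" "y \<le> s + h + h" "t - h \<le> z" "z \<le> t + h + h"
    then have "\<bar>y - y0\<bar> \<le> 2 * h" "\<bar>z - z0\<bar> \<le> 2 * h" using y0 z0 by auto
    then have "\<bar>F y z - F y0 z0\<bar> < \<epsilon>" using UC y0(1) z0(1) by blast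
    then show "a - \<epsilon> \<le> F y z \<and> F y z \<le> b + \<epsilon>" using F0 by linarith
  qed
  then have "controls M (\<lambda>j x. F (phi j x) (psi j x)) a b \<epsilon> \<delta>
      (band mu phis s (s + h) \<inter> band mu psis t (t + h))" by simp
  then show ?thesis by (rule controls_subset) auto
qed

text \<open>The bounded part is covered by finitely
  many cells, each handled by the cell lemma.\<close>

lemma strong_lim_compose:
  fixes F :: "real \<Rightarrow> real \<Rightarrow> real"
  assumes M_borel: "\<And>j. sets (M j) = sets borel" and M_fin: "\<And>j. finite_measure (M j)"
    and phi_seq: "is_seq M phi" and psi_seq: "is_seq M psi"
    and phis: "strong_lim M mu phi phis" and psis: "strong_lim M mu psi psis"
    and F: "continuous_on UNIV (\<lambda>(y, z). F y z)"
    and tail: "\<And>a b \<epsilon> \<delta>. a < b \<Longrightarrow> \<epsilon> > 0 \<Longrightarrow> \<delta> > 0 \<Longrightarrow> \<exists>N.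
       controls M (\<lambda>j x. F (phi j x) (psi j x)) a b \<epsilon> \<delta>
         {x \<in> band mu (\<lambda>x. F (phis x) (psis x)) a b. N \<le> \<bar>phis x\<bar> \<or> N \<le> \<bar>psis x\<bar>}"
  shows "strong_lim M mu (\<lambda>j x. F (phi j x) (psi j x)) (\<lambda>x. F (phis x) (psis x))"
proof (rule strong_limI)
  show "(\<lambda>x. F (phis x) (psis x)) \<in> borel_measurable (restrict_space (completion mu) (msupp mu))"
    using borel_measurable_compose2[OF F] strong_lim_measurable[OF phis] strong_lim_measurable[OF psis] .
  fix a b \<epsilon> \<delta> :: real assume ab: "a < b" and \<epsilon>: "\<epsilon> > 0" and \<delta>: "\<delta> > 0"
  let ?Fj = "\<lambda>j x. F (phi j x) (psi j x)" and ?G = "band mu (\<lambda>x. F (phis x) (psis x)) a b"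
  have Fj_seq: "is_seq M ?Fj" by (rule is_seq_compose[OF F phi_seq psi_seq])
  have "\<delta> / 2 > 0" using \<delta> by simp
  then obtain N where N: "controls M ?Fj a b \<epsilon> (\<delta> / 2) {x \<in> ?G. N \<le> \<bar>phis x\<bar> \<or> N \<le> \<bar>psis x\<bar>}"
    using tail[OF ab \<epsilon>] by blast
  obtain h where h: "h > 0" and UC: "\<And>y z y' z'. \<bar>y\<bar> < N \<Longrightarrow> \<bar>z\<bar> < N \<Longrightarrow>
      \<bar>y' - y\<bar> \<le> 2 * h \<Longrightarrow> \<bar>z' - z\<bar> \<le> 2 * h \<Longrightarrow> \<bar>F y' z' - F y z\<bar> < \<epsilon>"
    using continuous_uniform_on_bounded[OF F \<epsilon>, where N = N] by metis
  define I where "I = {- \<lceil>N / h\<rceil> .. \<lceil>N / h\<rceil>} \<times> {- \<lceil>N / h\<rceil> .. \<lceil>N / h\<rceil>}"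
  define d where "d = \<delta> / (2 * real (card I + 1))"
  define B where "B = {x \<in> ?G. \<bar>phis x\<bar> < N \<and> \<bar>psis x\<bar> < N}"
  define cell where "cell = (\<lambda>(k::int, l::int). B
      \<inter> band mu phis (of_int k * h) (of_int k * h + h) \<inter> band mu psis (of_int l * h) (of_int l * h + h))"
  have d: "d > 0" using \<delta> by (simp add: d_def)
  have cells: "controls M ?Fj a b \<epsilon> d (cell c)" for c
    unfolding cell_def B_def case_prod_beta
    by (rule controls_cell[OF M_borel M_fin phi_seq psi_seq phis psis h d UC])
  have "real (card I + 1) * d = \<delta> / 2" by (simp add: d_def field_simps)
  moreover have "controls M ?Fj a b \<epsilon> (real (card I + 1) * d) (\<Union>c\<in>I. cell c)"
    by (rule controls_UN[OF M_borel Fj_seq _ d cells]) (simp add: I_def)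
  ultimately have "controls M ?Fj a b \<epsilon> (\<delta> / 2) (\<Union>c\<in>I. cell c)" by metis
  from controls_Un[OF M_borel Fj_seq N this]
  have "controls M ?Fj a b \<epsilon> \<delta> ({x \<in> ?G. N \<le> \<bar>phis x\<bar> \<or> N \<le> \<bar>psis x\<bar>} \<union> (\<Union>c\<in>I. cell c))"
    by simp
  moreover have "B \<subseteq> (\<Union>c\<in>I. cell c)"
    using grid_cover[OF h, of ?G mu phis N psis] unfolding I_def cell_def B_def band_def by auto
  then have "?G \<subseteq> {x \<in> ?G. N \<le> \<bar>phis x\<bar> \<or> N \<le> \<bar>psis x\<bar>} \<union> (\<Union>c\<in>I. cell c)"
    unfolding B_def by auto
  ultimately show "controls M ?Fj a b \<epsilon> \<delta> ?G"
    by (rule controls_subset)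
qed

text \<open>Without regularity: if every band of F has bounded preimage, the large values of the
  limit function never meet a band, so no tail control is needed.\<close>

lemma strong_lim_compose_bounded:
  fixes F :: "real \<Rightarrow> real"
  assumes M_borel: "\<And>j. sets (M j) = sets borel" and M_fin: "\<And>j. finite_measure (M j)"
    and phi_seq: "is_seq M phi" and phis: "strong_lim M mu phi phis"
    and F: "continuous_on UNIV F"
    and bounded: "\<And>a b. \<exists>N. \<forall>y. a \<le> F y \<and> F y < b \<longrightarrow> \<bar>y\<bar> < N"
  shows "strong_lim M mu (\<lambda>j x. F (phi j x)) (\<lambda>x. F (phis x))"
proof -
  have F2: "continuous_on UNIV (\<lambda>(y, z::real). F y)"
    using continuous_on_compose[OF continuous_on_fst[OF continuous_on_id] continuous_on_subset[OF F]]
    by (simp add: case_prod_beta' o_def)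
  have "strong_lim M mu (\<lambda>j x. (\<lambda>y z. F y) (phi j x) (phi j x)) (\<lambda>x. (\<lambda>y z. F y) (phis x) (phis x))"
  proof (rule strong_lim_compose[OF M_borel M_fin phi_seq phi_seq phis phis F2])
    fix a b \<epsilon> \<delta> :: real assume "\<delta> > 0"
    obtain N where N: "\<And>y. a \<le> F y \<Longrightarrow> F y < b \<Longrightarrow> \<bar>y\<bar> < N" using bounded by blast
    have "{x \<in> band mu (\<lambda>x. F (phis x)) a b. N \<le> \<bar>phis x\<bar> \<or> N \<le> \<bar>phis x\<bar>} = {}"
      using N unfolding band_def by force
    then show "\<exists>N. controls M (\<lambda>j x. F (phi j x)) a b \<epsilon> \<delta>
        {x \<in> band mu (\<lambda>x. F (phis x)) a b. N \<le> \<bar>phis x\<bar> \<or> N \<le> \<bar>phis x\<bar>}"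
      using controls_empty[OF \<open>\<delta> > 0\<close>] by metis
  qed
  then show ?thesis by simp
qed

lemma strong_lim_const: "strong_lim M mu (\<lambda>j x. c) (\<lambda>x. c)"
proof (rule strong_limI)
  fix a b \<epsilon> \<delta> :: real assume "a < b" "\<epsilon> > 0" "\<delta> > 0"
  show "controls M (\<lambda>j x. c) a b \<epsilon> \<delta> (band mu (\<lambda>x. c) a b)"
  proof (cases "a \<le> c \<and> c < b")
    case True
    then show ?thesis
      unfolding controls_def using \<open>\<epsilon> > 0\<close> \<open>\<delta> > 0\<close> by (intro exI[of _ 0] exI[of _ UNIV]) auto
  next
    case False
    then have "band mu (\<lambda>x. c) a b = {}" unfolding band_def by auto
    then show ?thesis using controls_empty[OF \<open>\<delta> > 0\<close>] by simp
  qed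
qed simp

lemma strong_lim_scale:
  assumes M_borel: "\<And>j. sets (M j) = sets borel" and M_fin: "\<And>j. finite_measure (M j)"
    and phi_seq: "is_seq M phi" and phis: "strong_lim M mu phi phis"
  shows "strong_lim M mu (\<lambda>j x. c * phi j x) (\<lambda>x. c * phis x)"
proof (cases "c = 0")
  case True
  then show ?thesis using strong_lim_const[of M mu 0] by simp
next
  case False
  show ?thesis
  proof (rule strong_lim_compose_bounded[OF M_borel M_fin phi_seq phis, where F = "\<lambda>y. c * y"])
    fix a b :: real
    have "\<bar>y\<bar> < (\<bar>a\<bar> + \<bar>b\<bar>) / \<bar>c\<bar> + 1" if "a \<le> c * y" "c * y < b" for y
    proof -
      have "\<bar>c\<bar> * \<bar>y\<bar> \<le> \<bar>a\<bar> + \<bar>b\<bar>" using that by (simp add: abs_mult[symmetric])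
      then show ?thesis using False by (simp add: field_simps)
    qed
    then show "\<exists>N. \<forall>y. a \<le> c * y \<and> c * y < b \<longrightarrow> \<bar>y\<bar> < N" by blast
  qed (intro continuous_intros)
qed

text \<open>Part (1), powers: the bands of |y| powr p have bounded preimages since the map is
  strictly increasing in |y|.\<close>

lemma strong_lim_powr:
  assumes M_borel: "\<And>j. sets (M j) = sets borel" and M_fin: "\<And>j. finite_measure (M j)"
    and phi_seq: "is_seq M phi" and phis: "strong_lim M mu phi phis" and p: "p > 0"
  shows "strong_lim M mu (\<lambda>j x. \<bar>phi j x\<bar> powr p) (\<lambda>x. \<bar>phis x\<bar> powr p)"
proof (rule strong_lim_compose_bounded[OF M_borel M_fin phi_seq phis, where F = "\<lambda>y. \<bar>y\<bar> powr p"])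
  show "continuous_on UNIV (\<lambda>y. \<bar>y\<bar> powr p)"
    using p by (intro continuous_on_powr' continuous_intros) auto
  fix a b :: real
  define N where "N = \<bar>b\<bar> powr (1 / p) + 1"
  have "\<bar>y\<bar> < N" if "\<bar>y\<bar> powr p < b" for y
  proof (rule ccontr)
    assume "\<not> \<bar>y\<bar> < N"
    then have "(\<bar>b\<bar> powr (1 / p)) powr p < \<bar>y\<bar> powr p"
      using p by (intro powr_less_mono2) (auto simp: N_def)
    then have "\<bar>b\<bar> < \<bar>y\<bar> powr p" using p by (simp add: powr_powr)
    then show False using that by linarith
  qed
  then show "\<exists>N. \<forall>y. a \<le> \<bar>y\<bar> powr p \<and> \<bar>y\<bar> powr p < b \<longrightarrow> \<bar>y\<bar> < N" by blast
qed

text \<open>Under regular convergence the set where either limit function is large has small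
  limit measure, hence is controlled.\<close>

lemma controls_tail_regular:
  fixes phis psis :: "'a::metric_space \<Rightarrow> real"
  assumes reg: "regular_conv M mu"
    and M_borel: "\<And>j. sets (M j) = sets borel" and M_fin: "\<And>j. finite_measure (M j)"
    and mu_borel: "sets mu = sets borel" and mu_fin: "finite_measure mu"
    and phis: "phis \<in> borel_measurable (restrict_space (completion mu) (msupp mu))"
    and psis: "psis \<in> borel_measurable (restrict_space (completion mu) (msupp mu))"
    and \<delta>: "\<delta> > 0"
  shows "\<exists>N. controls M f a b \<epsilon> \<delta> {x \<in> msupp mu. N \<le> \<bar>phis x\<bar> \<or> N \<le> \<bar>psis x\<bar>}"
proof -
  define T where "T n = {x \<in> msupp mu. real n \<le> \<bar>phis x\<bar> \<or> real n \<le> \<bar>psis x\<bar>}" for n :: nat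
  have C_fin: "finite_measure (completion mu)"
    using mu_fin by (intro finite_measureI) (simp add: finite_measure.emeasure_finite)
  have T_sets: "T n \<in> sets (completion mu)" for n
  proof -
    have B: "{y :: real. real n \<le> \<bar>y\<bar>} \<in> sets borel"
      by (rule borel_closed) (intro closed_Collect_le continuous_intros)
    have "T n = {x \<in> msupp mu. phis x \<in> {y. real n \<le> \<bar>y\<bar>}} \<union> {x \<in> msupp mu. psis x \<in> {y. real n \<le> \<bar>y\<bar>}}"
      unfolding T_def by auto
    then show ?thesis
      using limit_level_set[OF mu_borel phis B] limit_level_set[OF mu_borel psis B] by simp
  qed
  have "(\<Inter>n. T n) = {}"
  proof -
    have "\<exists>n. x \<notin> T n" for x
    proof -
      obtain n :: nat where "\<bar>phis x\<bar> + \<bar>psis x\<bar> < n" using reals_Archimedean2 by blast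
      then have "x \<notin> T n" unfolding T_def by auto
      then show ?thesis ..
    qed
    then show ?thesis by blast
  qed
  moreover have "(\<lambda>n. measure (completion mu) (T n)) \<longlonglongrightarrow> measure (completion mu) (\<Inter>n. T n)"
    using T_sets by (intro finite_measure.finite_Lim_measure_decseq[OF C_fin])
      (auto simp: T_def decseq_def)
  ultimately have "(\<lambda>n. measure (completion mu) (T n)) \<longlonglongrightarrow> 0" by simp
  moreover have "\<delta> / 2 > 0" using \<delta> by simp
  ultimately obtain n where "measure (completion mu) (T n) < \<delta> / 2"
    by (meson LIMSEQ_le_const linorder_not_le order_refl)
  then have "controls M f a b \<epsilon> \<delta> (T n)"
    using T_sets by (intro controls_small_set[OF reg M_borel M_fin]) (auto simp: T_def)
  then show ?thesis unfolding T_def by blast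
qed

lemma strong_lim_compose_regular:
  fixes F :: "real \<Rightarrow> real \<Rightarrow> real"
  assumes reg: "regular_conv M mu"
    and M_borel: "\<And>j. sets (M j) = sets borel" and M_fin: "\<And>j. finite_measure (M j)"
    and mu_borel: "sets mu = sets borel" and mu_fin: "finite_measure mu"
    and phi_seq: "is_seq M phi" and psi_seq: "is_seq M psi"
    and phis: "strong_lim M mu phi phis" and psis: "strong_lim M mu psi psis"
    and F: "continuous_on UNIV (\<lambda>(y, z). F y z)"
  shows "strong_lim M mu (\<lambda>j x. F (phi j x) (psi j x)) (\<lambda>x. F (phis x) (psis x))"
proof (rule strong_lim_compose[OF M_borel M_fin phi_seq psi_seq phis psis F])
  fix a b \<epsilon> \<delta> :: real assume "\<delta> > 0"
  from controls_tail_regular[OF reg M_borel M_fin mu_borel mu_fin strong_lim_measurable[OF phis]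
      strong_lim_measurable[OF psis] this]
  obtain N where "controls M (\<lambda>j x. F (phi j x) (psi j x)) a b \<epsilon> \<delta>
      {x \<in> msupp mu. N \<le> \<bar>phis x\<bar> \<or> N \<le> \<bar>psis x\<bar>}" by blast
  then show "\<exists>N. controls M (\<lambda>j x. F (phi j x) (psi j x)) a b \<epsilon> \<delta>
      {x \<in> band mu (\<lambda>x. F (phis x) (psis x)) a b. N \<le> \<bar>phis x\<bar> \<or> N \<le> \<bar>psis x\<bar>}"
    by (intro exI[of _ N]) (erule controls_subset, auto simp: band_def)
qed

theorem theorem3p3:
  fixes K :: "'a::metric_space set"
    and M :: "nat \<Rightarrow> 'a measure" and mu :: "'a measure"
    and phi :: "nat \<Rightarrow> 'a \<Rightarrow> real" and phis :: "'a \<Rightarrow> real"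
  assumes K: "compact K"
    and M_borel: "\<And>j. sets (M j) = sets borel"
    and M_fin: "\<And>j. finite_measure (M j)"
    and M_K: "\<And>j. emeasure (M j) (- K) = 0"
    and mu_borel: "sets mu = sets borel"
    and mu_fin: "finite_measure mu"
    and mu_K: "emeasure mu (- K) = 0"
    and conv: "weak_star_conv K M mu"
    and phi_seq: "is_seq M phi"
    and phi_strong: "strong_lim M mu phi phis"
  shows
    "(\<forall>g. strong_lim M mu phi g \<longrightarrow> (AE x in mu. x \<in> msupp mu \<longrightarrow> g x = phis x))
     \<and> (\<forall>c::real. strong_lim M mu (\<lambda>j x. c * phi j x) (\<lambda>x. c * phis x))
     \<and> (\<forall>p::real. p > 0 \<longrightarrow>
          strong_lim M mu (\<lambda>j x. \<bar>phi j x\<bar> powr p) (\<lambda>x. \<bar>phis x\<bar> powr p))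
     \<and> (\<forall>psi psis. regular_conv M mu \<and> is_seq M psi \<and> in_AM M mu K psi
          \<and> strong_lim M mu psi psis \<longrightarrow>
          strong_lim M mu (\<lambda>j x. phi j x + psi j x) (\<lambda>x. phis x + psis x)
          \<and> strong_lim M mu (\<lambda>j x. phi j x * psi j x) (\<lambda>x. phis x * psis x))"
proof (intro conjI allI impI)
  fix g assume "strong_lim M mu phi g"
  then show "AE x in mu. x \<in> msupp mu \<longrightarrow> g x = phis x"
    by (rule strong_lim_unique[OF K M_borel M_fin M_K mu_borel mu_fin conv phi_seq _ phi_strong])
next
  fix c :: real
  show "strong_lim M mu (\<lambda>j x. c * phi j x) (\<lambda>x. c * phis x)"
    by (rule strong_lim_scale[OF M_borel M_fin phi_seq phi_strong])
next
  fix p :: real assume "p > 0"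
  then show "strong_lim M mu (\<lambda>j x. \<bar>phi j x\<bar> powr p) (\<lambda>x. \<bar>phis x\<bar> powr p)"
    by (rule strong_lim_powr[OF M_borel M_fin phi_seq phi_strong])
next
  fix psi psis
  assume "regular_conv M mu \<and> is_seq M psi \<and> in_AM M mu K psi \<and> strong_lim M mu psi psis"
  then have reg: "regular_conv M mu" and psi_seq: "is_seq M psi" and psis: "strong_lim M mu psi psis"
    by auto
  note compose = strong_lim_compose_regular[OF reg M_borel M_fin mu_borel mu_fin phi_seq psi_seq phi_strong psis]
  show "strong_lim M mu (\<lambda>j x. phi j x + psi j x) (\<lambda>x. phis x + psis x)"
    by (rule compose[where F = "\<lambda>y z. y + z"]) (simp add: case_prod_beta' continuous_intros)
  show "strong_lim M mu (\<lambda>j x. phi j x * psi j x) (\<lambda>x. phis x * psis x)"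
    by (rule compose[where F = "\<lambda>y z. y * z"]) (simp add: case_prod_beta' continuous_intros)
qed

end
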